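(* Let $a,b\in\mathbb F^*$, let $g,h\in\mathcal R$ with $x^n-a=hg$, and set $\hat a=a\,b\,\theta^n(b^{-1})$. Then $gb$ is a right divisor of $x^n-\hat a$ and $$M^\theta_{\hat a}(\overline{gb})=M^\theta_a(\overline g)\,M^\theta_{\hat a}(\overline b).$$ Consequently the codes $\mathfrak v_a(\mathcal R\overline g)$ and $\mathfrak v_{\hat a}(\mathcal R\overline{gb})$ are scale-equivalent, i.e. there are nonzero $d_0,\dots,d_{n-1}\in\mathbb F$ such that $(u_0,\dots,u_{n-1})\mapsto(d_0u_0,\dots,d_{n-1}u_{n-1})$ maps the first code onto the second; in particular the two codes have the same Hamming weight enumerator and the same minimum Hamming distance.
   Context: $\mathbb F$ is a finite field, $\theta\in\mathrm{Aut}(\mathbb F)$, $\mathcal R=\mathbb F[x;\theta]$ the skew polynomial ring (elements $\sum f_ix^i$ with left coefficients, $xb=\theta(b)x$), $n\in\mathbb N$. For $e\in\mathbb F^*$, $\mathcal S_e=\mathcal R/\mathcal R(x^n-e)$, $\overline f$ is the coset of $f$ (in $M^\theta_e(\overline f)$ and $\mathfrak v_e(\cdot)$ taken in $\mathcal S_e$), $\mathcal R\overline f$ the left submodule generated by $\overline f$, and $\mathfrak v_e:\mathcal S_e\to\mathbb F^n$ the inverse of $(c_0,\dots,c_{n-1})\mapsto\overline{\sum_{i=0}^{n-1}c_ix^i}$. $M^\theta_e(\overline f)$ is the $n\times n$ matrix whose row with index $i$ ($0\le i\le n-1$) is $\mathfrak v_e(\overline{x^if})$. *)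

theory Defs
  imports "HOL-Computational_Algebra.Polynomial" "Jordan_Normal_Form.Matrix"
begin

definition field_aut :: "('a::field \<Rightarrow> 'a) \<Rightarrow> bool" where
  "field_aut \<theta> \<longleftrightarrow> bij \<theta> \<and> (\<forall>x y. \<theta> (x + y) = \<theta> x + \<theta> y) \<and> (\<forall>x y. \<theta> (x * y) = \<theta> x * \<theta> y)"

text \<open>Skew polynomials F[x;theta] are represented by their (left) coefficient
  sequences, i.e. by ordinary polynomials; the ring product is the skew product
  (sum f_i x^i)(sum g_j x^j) = sum f_i theta^i(g_j) x^(i+j).\<close>
definition skew_mult :: "('a::field \<Rightarrow> 'a) \<Rightarrow> 'a poly \<Rightarrow> 'a poly \<Rightarrow> 'a poly" where
  "skew_mult \<theta> f g =
     (\<Sum>i\<le>degree f. \<Sum>j\<le>degree g. monom (coeff f i * (\<theta> ^^ i) (coeff g j)) (i + j))"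

definition xn_minus :: "nat \<Rightarrow> 'a::field \<Rightarrow> 'a poly" where
  "xn_minus n e = monom 1 n - [:e:]"

definition skew_right_dvd :: "('a::field \<Rightarrow> 'a) \<Rightarrow> 'a poly \<Rightarrow> 'a poly \<Rightarrow> bool" where
  "skew_right_dvd \<theta> g f \<longleftrightarrow> (\<exists>q. f = skew_mult \<theta> q g)"

text \<open>Canonical representative (degree < n) of the coset of f in S_e = R / R(x^n - e).\<close>
definition skew_rem :: "('a::field \<Rightarrow> 'a) \<Rightarrow> nat \<Rightarrow> 'a \<Rightarrow> 'a poly \<Rightarrow> 'a poly" where
  "skew_rem \<theta> n e f =
     (THE r. degree r < n \<and> (\<exists>q. f = r + skew_mult \<theta> q (xn_minus n e)))"

definition skew_vec :: "('a::field \<Rightarrow> 'a) \<Rightarrow> nat \<Rightarrow> 'a \<Rightarrow> 'a poly \<Rightarrow> 'a vec" where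
  "skew_vec \<theta> n e f = vec n (\<lambda>j. coeff (skew_rem \<theta> n e f) j)"

definition skew_mat :: "('a::field \<Rightarrow> 'a) \<Rightarrow> nat \<Rightarrow> 'a \<Rightarrow> 'a poly \<Rightarrow> 'a mat" where
  "skew_mat \<theta> n e f =
     mat n n (\<lambda>(i, j). coeff (skew_rem \<theta> n e (skew_mult \<theta> (monom 1 i) f)) j)"

definition skew_code :: "('a::field \<Rightarrow> 'a) \<Rightarrow> nat \<Rightarrow> 'a \<Rightarrow> 'a poly \<Rightarrow> 'a vec set" where
  "skew_code \<theta> n e g = {skew_vec \<theta> n e (skew_mult \<theta> f g) | f. True}"

definition hamming_wt :: "'a::zero vec \<Rightarrow> nat" where
  "hamming_wt u = card {i. i < dim_vec u \<and> u $ i \<noteq> 0}"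

definition hamming_dist :: "'a vec \<Rightarrow> 'a vec \<Rightarrow> nat" where
  "hamming_dist u v = card {i. i < dim_vec u \<and> u $ i \<noteq> v $ i}"

definition min_dist :: "'a vec set \<Rightarrow> nat" where
  "min_dist C = Inf {hamming_dist u v | u v. u \<in> C \<and> v \<in> C \<and> u \<noteq> v}"

end

theory Submission
  imports Defs
begin

text \<open>Right multiplication by a nonzero constant b multiplies the i-th coefficient by \<open>\<theta>^i(b)\<close>,
  and it sends \<open>x^n - a\<close> to \<open>\<theta>^n(b) (x^n - ahat)\<close> with \<open>ahat = a b \<theta>^n(b^-1)\<close>. Hence it carries
  left multiples of \<open>x^n - a\<close> to left multiples of \<open>x^n - ahat\<close>, so it commutes with reduction
  modulo these. Row i of \<open>M(gb)\<close> is therefore row i of \<open>M(g)\<close> with its j-th entry scaled by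
  \<open>\<theta>^j(b)\<close>, i.e. \<open>M(g)\<close> times the diagonal matrix \<open>M(b)\<close>, and the two codes differ by the same
  coordinate scaling, which preserves Hamming weights and distances.\<close>

lemma dim_row_skew_mat [simp]: "dim_row (skew_mat \<theta> n e f) = n"
  and dim_col_skew_mat [simp]: "dim_col (skew_mat \<theta> n e f) = n"
  by (simp_all add: skew_mat_def)

lemma index_skew_mat:
  "i < n \<Longrightarrow> j < n \<Longrightarrow> skew_mat \<theta> n e f $$ (i, j) = coeff (skew_rem \<theta> n e (skew_mult \<theta> (monom 1 i) f)) j"
  by (simp add: skew_mat_def)

lemma skew_code_eq_range: "skew_code \<theta> n e g = range (\<lambda>f. skew_vec \<theta> n e (skew_mult \<theta> f g))"
  by (auto simp: skew_code_def)

lemma skew_code_subset_carrier: "skew_code \<theta> n e g \<subseteq> carrier_vec n"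
  by (auto simp: skew_code_eq_range skew_vec_def)

locale field_endo =
  fixes \<theta> :: "'a::field \<Rightarrow> 'a"
  assumes hom_add: "\<And>x y. \<theta> (x + y) = \<theta> x + \<theta> y"
    and hom_mult: "\<And>x y. \<theta> (x * y) = \<theta> x * \<theta> y"
    and hom_one: "\<theta> 1 = 1"
begin

lemma hom_zero: "\<theta> 0 = 0"
proof (rule add_left_imp_eq)
  show "\<theta> 0 + \<theta> 0 = \<theta> 0 + 0"
    using hom_add[of 0 0] by simp
qed

lemma funpow_hom_zero [simp]: "(\<theta> ^^ i) 0 = 0"
  by (induction i) (auto simp: hom_zero)

lemma funpow_hom_one [simp]: "(\<theta> ^^ i) 1 = 1"
  by (induction i) (auto simp: hom_one)

lemma funpow_hom_mult: "(\<theta> ^^ i) (x * y) = (\<theta> ^^ i) x * (\<theta> ^^ i) y"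
  by (induction i) (auto simp: hom_mult)

lemma funpow_hom_nonzero: "b \<noteq> 0 \<Longrightarrow> (\<theta> ^^ i) b \<noteq> 0"
  using funpow_hom_mult[of i b "inverse b"] by auto

lemma funpow_hom_inverse_cancel: "b \<noteq> 0 \<Longrightarrow> (\<theta> ^^ i) b * (\<theta> ^^ i) (inverse b) = 1"
  by (simp add: funpow_hom_mult[symmetric])

subsection \<open>Coefficients of skew products\<close>

lemma coeff_skew_mult:
  "coeff (skew_mult \<theta> f g) k = (\<Sum>i\<le>k. coeff f i * (\<theta> ^^ i) (coeff g (k - i)))"
proof -
  have "coeff (skew_mult \<theta> f g) k
      = (\<Sum>i\<le>degree f. \<Sum>j\<le>degree g. if i + j = k then coeff f i * (\<theta> ^^ i) (coeff g j) else 0)"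
    by (simp add: skew_mult_def coeff_sum coeff_monom)
  also have "\<dots> = (\<Sum>i\<le>degree f. if i \<le> k then coeff f i * (\<theta> ^^ i) (coeff g (k - i)) else 0)"
  proof (rule sum.cong[OF refl])
    fix i
    have "(\<Sum>j\<le>degree g. if i + j = k then coeff f i * (\<theta> ^^ i) (coeff g j) else 0)
        = (\<Sum>j\<le>degree g. if j = k - i then (if i \<le> k then coeff f i * (\<theta> ^^ i) (coeff g j) else 0) else 0)"
      by (rule sum.cong) auto
    also have "\<dots> = (if i \<le> k then coeff f i * (\<theta> ^^ i) (coeff g (k - i)) else 0)"
      by (auto simp: coeff_eq_0)
    finally show "(\<Sum>j\<le>degree g. if i + j = k then coeff f i * (\<theta> ^^ i) (coeff g j) else 0)
        = (if i \<le> k then coeff f i * (\<theta> ^^ i) (coeff g (k - i)) else 0)" .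
  qed
  also have "\<dots> = (\<Sum>i\<le>degree f + k. if i \<le> k then coeff f i * (\<theta> ^^ i) (coeff g (k - i)) else 0)"
    by (rule sum.mono_neutral_left) (auto simp: coeff_eq_0)
  also have "\<dots> = (\<Sum>i\<le>k. coeff f i * (\<theta> ^^ i) (coeff g (k - i)))"
    by (rule sum.mono_neutral_cong_right) auto
  finally show ?thesis .
qed

lemma coeff_skew_mult_const_right: "coeff (skew_mult \<theta> f [:b:]) k = coeff f k * (\<theta> ^^ k) b"
proof -
  have "coeff (skew_mult \<theta> f [:b:]) k = (\<Sum>i\<le>k. if i = k then coeff f i * (\<theta> ^^ i) b else 0)"
    unfolding coeff_skew_mult by (rule sum.cong) (auto simp: coeff_pCons split: nat.splits)
  then show ?thesis by simp
qed

lemma coeff_skew_mult_monom_left: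
  "coeff (skew_mult \<theta> (monom c d) f) k = (if d \<le> k then c * (\<theta> ^^ d) (coeff f (k - d)) else 0)"
proof -
  have "coeff (skew_mult \<theta> (monom c d) f) k
      = (\<Sum>i\<le>k. if i = d then c * (\<theta> ^^ i) (coeff f (k - i)) else 0)"
    unfolding coeff_skew_mult by (rule sum.cong) (auto simp: coeff_monom)
  then show ?thesis by simp
qed

lemma skew_mult_monom_const: "skew_mult \<theta> (monom 1 j) [:b:] = monom ((\<theta> ^^ j) b) j"
  by (rule poly_eqI) (auto simp: coeff_skew_mult_const_right coeff_monom)

lemma skew_mult_add_left: "skew_mult \<theta> (p + q) r = skew_mult \<theta> p r + skew_mult \<theta> q r"
  by (rule poly_eqI) (simp add: coeff_skew_mult distrib_right sum.distrib)

lemma skew_mult_diff_left: "skew_mult \<theta> (p - q) r = skew_mult \<theta> p r - skew_mult \<theta> q r"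
  by (rule poly_eqI) (simp add: coeff_skew_mult left_diff_distrib sum_subtractf)

lemma skew_mult_zero_left [simp]: "skew_mult \<theta> 0 r = 0"
  by (rule poly_eqI) (simp add: coeff_skew_mult)

lemma skew_mult_smult_left: "skew_mult \<theta> (Polynomial.smult c p) r = Polynomial.smult c (skew_mult \<theta> p r)"
  by (rule poly_eqI) (simp add: coeff_skew_mult sum_distrib_left mult.assoc)

lemma degree_skew_mult_const_right: "degree (skew_mult \<theta> f [:b:]) \<le> degree f"
  by (rule degree_le) (simp add: coeff_skew_mult_const_right coeff_eq_0)

lemma skew_mult_assoc_const_right:
  "skew_mult \<theta> (skew_mult \<theta> f g) [:b:] = skew_mult \<theta> f (skew_mult \<theta> g [:b:])"
proof (rule poly_eqI)
  fix k
  have "coeff (skew_mult \<theta> f (skew_mult \<theta> g [:b:])) k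
      = (\<Sum>i\<le>k. coeff f i * (\<theta> ^^ i) (coeff g (k - i)) * (\<theta> ^^ k) b)"
    unfolding coeff_skew_mult[of f]
  proof (rule sum.cong[OF refl])
    fix i assume "i \<in> {..k}"
    have "(\<theta> ^^ i) ((\<theta> ^^ (k - i)) b) = (\<theta> ^^ (i + (k - i))) b"
      by (simp add: funpow_add)
    with \<open>i \<in> {..k}\<close> have "(\<theta> ^^ i) ((\<theta> ^^ (k - i)) b) = (\<theta> ^^ k) b"
      by simp
    then show "coeff f i * (\<theta> ^^ i) (coeff (skew_mult \<theta> g [:b:]) (k - i))
        = coeff f i * (\<theta> ^^ i) (coeff g (k - i)) * (\<theta> ^^ k) b"
      by (simp add: coeff_skew_mult_const_right funpow_hom_mult)
  qed
  then show "coeff (skew_mult \<theta> (skew_mult \<theta> f g) [:b:]) k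
      = coeff (skew_mult \<theta> f (skew_mult \<theta> g [:b:])) k"
    by (simp only: coeff_skew_mult_const_right coeff_skew_mult[of f g] sum_distrib_right)
qed

lemma skew_mult_assoc_const_middle:
  "skew_mult \<theta> (skew_mult \<theta> q [:c:]) p = skew_mult \<theta> q (Polynomial.smult c p)"
proof (rule poly_eqI)
  fix k
  show "coeff (skew_mult \<theta> (skew_mult \<theta> q [:c:]) p) k = coeff (skew_mult \<theta> q (Polynomial.smult c p)) k"
    unfolding coeff_skew_mult[of "skew_mult \<theta> q [:c:]"] coeff_skew_mult[of q "Polynomial.smult c p"]
    by (rule sum.cong[OF refl]) (simp add: coeff_skew_mult_const_right funpow_hom_mult mult.assoc)
qed

subsection \<open>Division by \<open>x\<^sup>n - e\<close>\<close>

lemma coeff_xn_minus: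
  "0 < n \<Longrightarrow> coeff (xn_minus n e) k = (if k = n then 1 else if k = 0 then - e else 0)"
  by (auto simp: xn_minus_def coeff_monom coeff_pCons split: nat.splits)

lemma degree_skew_mult_xn_minus:
  assumes n: "0 < n" and q: "q \<noteq> 0"
  shows "n \<le> degree (skew_mult \<theta> q (xn_minus n e))"
proof -
  let ?d = "degree q"
  have "coeff (skew_mult \<theta> q (xn_minus n e)) (?d + n)
      = (\<Sum>i\<le>?d + n. if i = ?d then coeff q ?d else 0)"
    unfolding coeff_skew_mult
  proof (rule sum.cong[OF refl])
    fix i
    consider "i < ?d" | "i = ?d" | "?d < i" by linarith
    then show "coeff q i * (\<theta> ^^ i) (coeff (xn_minus n e) (?d + n - i))
        = (if i = ?d then coeff q ?d else 0)"
    proof cases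
      case 1
      then have "?d + n - i \<noteq> n" "?d + n - i \<noteq> 0"
        using n by auto
      with 1 show ?thesis
        by (simp add: coeff_xn_minus[OF n])
    qed (simp_all add: coeff_xn_minus[OF n] coeff_eq_0)
  qed
  with q have "coeff (skew_mult \<theta> q (xn_minus n e)) (?d + n) \<noteq> 0"
    by simp
  then have "?d + n \<le> degree (skew_mult \<theta> q (xn_minus n e))"
    by (rule le_degree)
  then show ?thesis
    by simp
qed

lemma skew_division_exists:
  assumes n: "0 < n"
  shows "\<exists>r q. degree r < n \<and> f = r + skew_mult \<theta> q (xn_minus n e)"
proof (induction "degree f" arbitrary: f rule: less_induct)
  case less
  show ?case
  proof (cases "degree f < n")
    case True
    then show ?thesis
      by (metis add.right_neutral skew_mult_zero_left)
  next
    case False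
    define d where "d = degree f - n"
    define f' where "f' = f - skew_mult \<theta> (monom (lead_coeff f) d) (xn_minus n e)"
    have "coeff f' k = 0" if "degree f \<le> k" for k
    proof -
      have "coeff f' k = coeff f k - lead_coeff f * (\<theta> ^^ d) (coeff (xn_minus n e) (k - d))"
        using that by (simp add: f'_def d_def coeff_skew_mult_monom_left)
      then show ?thesis
        using that False n
        by (cases "k = degree f") (auto simp: coeff_xn_minus d_def coeff_eq_0)
    qed
    then have "degree f' < degree f"
      using False n degree_le[of "degree f - 1" f'] by fastforce
    then obtain r q where rq: "degree r < n" "f' = r + skew_mult \<theta> q (xn_minus n e)"
      using less by blast
    then have "f = r + skew_mult \<theta> (q + monom (lead_coeff f) d) (xn_minus n e)"
      by (simp add: f'_def skew_mult_add_left algebra_simps)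
    with rq(1) show ?thesis
      by blast
  qed
qed

lemma skew_division_unique:
  assumes n: "0 < n" and "degree r1 < n" "degree r2 < n"
    and eq: "r1 + skew_mult \<theta> q1 (xn_minus n e) = r2 + skew_mult \<theta> q2 (xn_minus n e)"
  shows "r1 = r2"
proof (rule ccontr)
  assume "r1 \<noteq> r2"
  have "r1 - r2 = skew_mult \<theta> (q2 - q1) (xn_minus n e)"
    using eq by (simp add: skew_mult_diff_left algebra_simps)
  with \<open>r1 \<noteq> r2\<close> have "n \<le> degree (r1 - r2)"
    using degree_skew_mult_xn_minus[OF n, of "q2 - q1"] by fastforce
  moreover have "degree (r1 - r2) \<le> max (degree r1) (degree r2)"
    by (rule degree_diff_le_max)
  ultimately show False
    using assms(2,3) by simp
qed

lemma skew_rem_eqI: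
  assumes n: "0 < n" and r: "degree r < n" and f: "f = r + skew_mult \<theta> q (xn_minus n e)"
  shows "skew_rem \<theta> n e f = r"
  unfolding skew_rem_def
proof (rule the_equality)
  show "degree r < n \<and> (\<exists>q. f = r + skew_mult \<theta> q (xn_minus n e))"
    using r f by blast
next
  fix r' assume "degree r' < n \<and> (\<exists>q. f = r' + skew_mult \<theta> q (xn_minus n e))"
  then show "r' = r"
    using skew_division_unique[OF n _ r] f by metis
qed

lemma skew_rem_small: "0 < n \<Longrightarrow> degree r < n \<Longrightarrow> skew_rem \<theta> n e r = r"
  using skew_rem_eqI[of n r r 0] by simp

subsection \<open>Right multiplication by a constant\<close>

lemma skew_mult_xn_minus_const:
  assumes "0 < n" and "b \<noteq> 0"
  shows "skew_mult \<theta> (xn_minus n a) [:b:]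
       = Polynomial.smult ((\<theta> ^^ n) b) (xn_minus n (a * b * (\<theta> ^^ n) (inverse b)))"
  using funpow_hom_inverse_cancel[OF assms(2), of n] assms
  by (intro poly_eqI) (auto simp: coeff_skew_mult_const_right coeff_xn_minus algebra_simps)

lemma skew_right_dvd_xn_minus_mult_const:
  assumes "0 < n" and "b \<noteq> 0" and "xn_minus n a = skew_mult \<theta> h g"
  shows "skew_right_dvd \<theta> (skew_mult \<theta> g [:b:]) (xn_minus n (a * b * (\<theta> ^^ n) (inverse b)))"
proof -
  let ?c = "(\<theta> ^^ n) b"
  have "skew_mult \<theta> (Polynomial.smult (inverse ?c) h) (skew_mult \<theta> g [:b:])
      = Polynomial.smult (inverse ?c) (skew_mult \<theta> (xn_minus n a) [:b:])"
    by (simp add: assms(3) skew_mult_smult_left skew_mult_assoc_const_right)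
  also have "\<dots> = xn_minus n (a * b * (\<theta> ^^ n) (inverse b))"
    using funpow_hom_nonzero[OF assms(2)] by (simp add: skew_mult_xn_minus_const[OF assms(1,2)])
  finally show ?thesis
    unfolding skew_right_dvd_def by metis
qed

lemma skew_rem_mult_const_right:
  assumes n: "0 < n" and b: "b \<noteq> 0"
  shows "skew_rem \<theta> n (a * b * (\<theta> ^^ n) (inverse b)) (skew_mult \<theta> f [:b:])
       = skew_mult \<theta> (skew_rem \<theta> n a f) [:b:]"
proof -
  obtain r q where rq: "degree r < n" "f = r + skew_mult \<theta> q (xn_minus n a)"
    using skew_division_exists[OF n] by blast
  then have "skew_mult \<theta> f [:b:] = skew_mult \<theta> r [:b:]
      + skew_mult \<theta> (skew_mult \<theta> q [:(\<theta> ^^ n) b:]) (xn_minus n (a * b * (\<theta> ^^ n) (inverse b)))"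
    by (simp add: skew_mult_add_left skew_mult_assoc_const_right skew_mult_xn_minus_const[OF n b]
        skew_mult_assoc_const_middle)
  moreover have "degree (skew_mult \<theta> r [:b:]) < n"
    using degree_skew_mult_const_right[of r b] rq(1) by simp
  ultimately show ?thesis
    using skew_rem_eqI[OF n] rq by metis
qed

lemma skew_mat_const:
  assumes "0 < n" and "j < n" and "l < n"
  shows "skew_mat \<theta> n e [:b:] $$ (j, l) = (if j = l then (\<theta> ^^ j) b else 0)"
proof -
  have "degree (monom ((\<theta> ^^ j) b) j) < n"
    using degree_monom_le[of "(\<theta> ^^ j) b" j] assms(2) by linarith
  then show ?thesis
    using assms by (simp add: index_skew_mat skew_mult_monom_const skew_rem_small coeff_monom)
qed

lemma skew_mat_mult_const_right:
  fixes a b :: 'a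
  assumes n: "0 < n" and b: "b \<noteq> 0"
  defines "ahat \<equiv> a * b * (\<theta> ^^ n) (inverse b)"
  shows "skew_mat \<theta> n ahat (skew_mult \<theta> g [:b:]) = skew_mat \<theta> n a g * skew_mat \<theta> n ahat [:b:]"
proof (rule eq_matI)
  fix i l assume "i < dim_row (skew_mat \<theta> n a g * skew_mat \<theta> n ahat [:b:])"
    and "l < dim_col (skew_mat \<theta> n a g * skew_mat \<theta> n ahat [:b:])"
  then have i: "i < n" and l: "l < n"
    by simp_all
  have "(skew_mat \<theta> n a g * skew_mat \<theta> n ahat [:b:]) $$ (i, l)
      = (\<Sum>j = 0..<n. skew_mat \<theta> n a g $$ (i, j) * skew_mat \<theta> n ahat [:b:] $$ (j, l))"
    using i l by (simp add: scalar_prod_def)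
  also have "\<dots> = (\<Sum>j = 0..<n. if j = l then skew_mat \<theta> n a g $$ (i, l) * (\<theta> ^^ l) b else 0)"
    using l by (intro sum.cong) (auto simp: skew_mat_const[OF n])
  also have "\<dots> = coeff (skew_rem \<theta> n a (skew_mult \<theta> (monom 1 i) g)) l * (\<theta> ^^ l) b"
    using i l by (simp add: index_skew_mat)
  also have "\<dots> = skew_mat \<theta> n ahat (skew_mult \<theta> g [:b:]) $$ (i, l)"
    using i l by (simp add: index_skew_mat ahat_def skew_mult_assoc_const_right[symmetric]
        skew_rem_mult_const_right[OF n b] coeff_skew_mult_const_right)
  finally show "skew_mat \<theta> n ahat (skew_mult \<theta> g [:b:]) $$ (i, l)
      = (skew_mat \<theta> n a g * skew_mat \<theta> n ahat [:b:]) $$ (i, l)" ..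
qed simp_all

end

lemma field_aut_field_endo: "field_aut \<theta> \<Longrightarrow> field_endo \<theta>"
proof -
  assume "field_aut \<theta>"
  then have add: "\<And>x y. \<theta> (x + y) = \<theta> x + \<theta> y" and mult: "\<And>x y. \<theta> (x * y) = \<theta> x * \<theta> y"
    and "inj \<theta>"
    by (auto simp: field_aut_def bij_def)
  have "\<theta> 0 + \<theta> 0 = \<theta> 0 + 0"
    using add[of 0 0] by simp
  then have "\<theta> 0 = 0"
    by (rule add_left_imp_eq)
  with \<open>inj \<theta>\<close> have "\<theta> 1 \<noteq> 0"
    by (metis injD one_neq_zero)
  with mult[of 1 1] have "\<theta> 1 = 1"
    by simp
  with add mult show ?thesis
    by unfold_locales
qed

subsection \<open>Coordinate scaling of codes\<close>

definition scale_coords :: "nat \<Rightarrow> (nat \<Rightarrow> 'a::field) \<Rightarrow> 'a vec \<Rightarrow> 'a vec" where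
  "scale_coords n d u = vec n (\<lambda>i. d i * u $ i)"

context
  fixes n :: nat and d :: "nat \<Rightarrow> 'a::field"
  assumes nonzero: "\<forall>i<n. d i \<noteq> 0"
begin

lemma hamming_wt_scale_coords: "dim_vec u = n \<Longrightarrow> hamming_wt (scale_coords n d u) = hamming_wt u"
  unfolding hamming_wt_def scale_coords_def using nonzero
  by (intro arg_cong[where f = card] Collect_cong) auto

lemma hamming_dist_scale_coords:
  "dim_vec u = n \<Longrightarrow> dim_vec v = n
    \<Longrightarrow> hamming_dist (scale_coords n d u) (scale_coords n d v) = hamming_dist u v"
  unfolding hamming_dist_def scale_coords_def using nonzero
  by (intro arg_cong[where f = card] Collect_cong) auto

lemma inj_on_scale_coords: "inj_on (scale_coords n d) (carrier_vec n)"
proof (rule inj_onI)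
  fix u v assume u: "u \<in> carrier_vec n" and v: "v \<in> carrier_vec n"
    and eq: "scale_coords n d u = scale_coords n d v"
  show "u = v"
  proof (rule eq_vecI)
    fix i assume "i < dim_vec v"
    with v have "i < n"
      by simp
    from eq have "scale_coords n d u $ i = scale_coords n d v $ i"
      by simp
    with \<open>i < n\<close> have "d i * u $ i = d i * v $ i"
      by (simp add: scale_coords_def)
    with \<open>i < n\<close> nonzero show "u $ i = v $ i"
      by simp
  qed (use u v in simp)
qed

lemma weight_distribution_scale_coords:
  assumes "C \<subseteq> carrier_vec n"
  shows "card {u \<in> scale_coords n d ` C. hamming_wt u = k} = card {u \<in> C. hamming_wt u = k}"
proof -
  have "{u \<in> scale_coords n d ` C. hamming_wt u = k} = scale_coords n d ` {u \<in> C. hamming_wt u = k}"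
  proof (intro equalityI subsetI)
    fix u assume "u \<in> {u \<in> scale_coords n d ` C. hamming_wt u = k}"
    then obtain v where "v \<in> C" "u = scale_coords n d v" "hamming_wt u = k"
      by blast
    with assms show "u \<in> scale_coords n d ` {u \<in> C. hamming_wt u = k}"
      using hamming_wt_scale_coords[of v] by auto
  next
    fix u assume "u \<in> scale_coords n d ` {u \<in> C. hamming_wt u = k}"
    then obtain v where "v \<in> C" "u = scale_coords n d v" "hamming_wt v = k"
      by blast
    with assms show "u \<in> {u \<in> scale_coords n d ` C. hamming_wt u = k}"
      using hamming_wt_scale_coords[of v] by auto
  qed
  moreover have "inj_on (scale_coords n d) {u \<in> C. hamming_wt u = k}"
    using assms by (auto intro: inj_on_subset[OF inj_on_scale_coords])
  ultimately show ?thesis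
    by (simp add: card_image)
qed

lemma min_dist_scale_coords:
  assumes C: "C \<subseteq> carrier_vec n"
  shows "min_dist (scale_coords n d ` C) = min_dist C"
proof -
  have inj: "inj_on (scale_coords n d) C"
    using C by (rule inj_on_subset[OF inj_on_scale_coords])
  have dist: "hamming_dist (scale_coords n d u) (scale_coords n d v) = hamming_dist u v"
    if "u \<in> C" "v \<in> C" for u v
    using that C by (intro hamming_dist_scale_coords) auto
  have "{hamming_dist u v | u v. u \<in> scale_coords n d ` C \<and> v \<in> scale_coords n d ` C \<and> u \<noteq> v}
      = {hamming_dist u v | u v. u \<in> C \<and> v \<in> C \<and> u \<noteq> v}" (is "?L = ?R")
  proof (intro equalityI subsetI)
    fix x assume "x \<in> ?L"
    then obtain u v where uv: "u \<in> C" "v \<in> C" "u \<noteq> v"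
      and "x = hamming_dist (scale_coords n d u) (scale_coords n d v)"
      by blast
    with dist have "x = hamming_dist u v"
      by simp
    with uv show "x \<in> ?R"
      by blast
  next
    fix x assume "x \<in> ?R"
    then obtain u v where uv: "u \<in> C" "v \<in> C" "u \<noteq> v" and "x = hamming_dist u v"
      by blast
    with dist have "x = hamming_dist (scale_coords n d u) (scale_coords n d v)"
      by simp
    moreover have "scale_coords n d u \<noteq> scale_coords n d v"
      using uv inj by (simp add: inj_on_eq_iff)
    ultimately show "x \<in> ?L"
      using uv by blast
  qed
  then show ?thesis
    by (simp add: min_dist_def)
qed

end

context field_endo
begin

lemma skew_code_mult_const_right:
  assumes n: "0 < n" and b: "b \<noteq> 0"
  shows "scale_coords n (\<lambda>i. (\<theta> ^^ i) b) ` skew_code \<theta> n a g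
       = skew_code \<theta> n (a * b * (\<theta> ^^ n) (inverse b)) (skew_mult \<theta> g [:b:])"
proof -
  have "scale_coords n (\<lambda>i. (\<theta> ^^ i) b) (skew_vec \<theta> n a (skew_mult \<theta> f g))
      = skew_vec \<theta> n (a * b * (\<theta> ^^ n) (inverse b)) (skew_mult \<theta> f (skew_mult \<theta> g [:b:]))" for f
    by (auto simp: scale_coords_def skew_vec_def skew_mult_assoc_const_right[symmetric]
        skew_rem_mult_const_right[OF n b] coeff_skew_mult_const_right mult.commute)
  then show ?thesis
    unfolding skew_code_eq_range image_image by presburger
qed

end

theorem theorem5p4:
  fixes \<theta> :: "'a::{field,finite} \<Rightarrow> 'a" and n :: nat and a b :: 'a and g h :: "'a poly"
  assumes "field_aut \<theta>" and "0 < n"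
    and "a \<noteq> 0" and "b \<noteq> 0"
    and "xn_minus n a = skew_mult \<theta> h g"
  defines "ahat \<equiv> a * b * (\<theta> ^^ n) (inverse b)"
  shows "skew_right_dvd \<theta> (skew_mult \<theta> g [:b:]) (xn_minus n ahat)
       \<and> skew_mat \<theta> n ahat (skew_mult \<theta> g [:b:])
           = skew_mat \<theta> n a g * skew_mat \<theta> n ahat [:b:]
       \<and> (\<exists>d :: nat \<Rightarrow> 'a. (\<forall>i<n. d i \<noteq> 0) \<and>
            (\<lambda>u. vec n (\<lambda>i. d i * u $ i)) ` skew_code \<theta> n a g
              = skew_code \<theta> n ahat (skew_mult \<theta> g [:b:]))
       \<and> (\<forall>k. card {u \<in> skew_code \<theta> n a g. hamming_wt u = k}
              = card {u \<in> skew_code \<theta> n ahat (skew_mult \<theta> g [:b:]). hamming_wt u = k})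
       \<and> min_dist (skew_code \<theta> n a g) = min_dist (skew_code \<theta> n ahat (skew_mult \<theta> g [:b:]))"
proof -
  interpret field_endo \<theta>
    using assms(1) by (rule field_aut_field_endo)
  define d where "d i = (\<theta> ^^ i) b" for i
  have d: "\<forall>i<n. d i \<noteq> 0"
    using funpow_hom_nonzero[OF assms(4)] by (simp add: d_def)
  have image: "scale_coords n d ` skew_code \<theta> n a g = skew_code \<theta> n ahat (skew_mult \<theta> g [:b:])"
    unfolding d_def ahat_def by (rule skew_code_mult_const_right[OF assms(2,4)])
  have "skew_right_dvd \<theta> (skew_mult \<theta> g [:b:]) (xn_minus n ahat)"
    unfolding ahat_def by (rule skew_right_dvd_xn_minus_mult_const[OF assms(2,4,5)])
  moreover have "skew_mat \<theta> n ahat (skew_mult \<theta> g [:b:]) = skew_mat \<theta> n a g * skew_mat \<theta> n ahat [:b:]"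
    unfolding ahat_def by (rule skew_mat_mult_const_right[OF assms(2,4)])
  moreover have "card {u \<in> skew_code \<theta> n a g. hamming_wt u = k}
      = card {u \<in> skew_code \<theta> n ahat (skew_mult \<theta> g [:b:]). hamming_wt u = k}" for k
    using weight_distribution_scale_coords[OF d skew_code_subset_carrier, of \<theta> a g k]
    unfolding image by simp
  moreover have "min_dist (skew_code \<theta> n a g) = min_dist (skew_code \<theta> n ahat (skew_mult \<theta> g [:b:]))"
    using min_dist_scale_coords[OF d skew_code_subset_carrier, of \<theta> a g]
    unfolding image by simp
  ultimately show ?thesis
    using d image unfolding scale_coords_def by blast
qed

end
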